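(* Let $k\ge2$ be an integer and let $n\ge4k-2$ be an even integer. Let $P$ be the property of being $k$-edge-connected. Then the number of $(P,n)$-sinks, i.e. $|S(P,n)|$, is at least $p(k-1)$, where $p$ denotes the integer partition function.
   Context: Graphs are finite and simple. A graphical sequence of length $n$ is a nondecreasing integer sequence that is the degree sequence of some graph (a realization). For nondecreasing sequences, $\pi'\ge\pi$ ($\pi'$ majorizes $\pi$) means termwise $\ge$. A graphical sequence is forcibly $P$ if every realization has property $P$. Let $G_n$ be the poset of graphical sequences of length $n$ under majorization and $\overline{P_n}$ the subposet of those not forcibly $P$; $S(P,n)$ is the set of maximal elements of $\overline{P_n}$. $p(r)$ is the number of partitions of the integer $r$. *)

theory Defs
  imports Main
begin

definition simple_graph :: "nat \<Rightarrow> nat set set \<Rightarrow> bool" where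
  "simple_graph n E \<longleftrightarrow> (\<forall>e\<in>E. \<exists>u v. u < n \<and> v < n \<and> u \<noteq> v \<and> e = {u, v})"

definition degree :: "nat set set \<Rightarrow> nat \<Rightarrow> nat" where
  "degree E v = card {e\<in>E. v \<in> e}"

definition connected_graph :: "nat \<Rightarrow> nat set set \<Rightarrow> bool" where
  "connected_graph n E \<longleftrightarrow>
     (\<forall>u<n. \<forall>v<n. (\<lambda>x y. {x, y} \<in> E)\<^sup>*\<^sup>* u v)"

definition k_edge_connected :: "nat \<Rightarrow> nat \<Rightarrow> nat set set \<Rightarrow> bool" where
  "k_edge_connected k n E \<longleftrightarrow>
     (\<forall>F \<subseteq> E. card F < k \<longrightarrow> connected_graph n (E - F))"

definition realizes :: "nat set set \<Rightarrow> nat list \<Rightarrow> bool" where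
  "realizes E d \<longleftrightarrow> simple_graph (length d) E \<and> (\<forall>i < length d. degree E i = d ! i)"

definition graphical :: "nat \<Rightarrow> nat list \<Rightarrow> bool" where
  "graphical n d \<longleftrightarrow> length d = n \<and> sorted d \<and> (\<exists>E. realizes E d)"

definition majorizes :: "nat list \<Rightarrow> nat list \<Rightarrow> bool" where
  "majorizes d' d \<longleftrightarrow> length d' = length d \<and> (\<forall>i < length d. d ! i \<le> d' ! i)"

definition forcibly :: "(nat \<Rightarrow> nat set set \<Rightarrow> bool) \<Rightarrow> nat list \<Rightarrow> bool" where
  "forcibly P d \<longleftrightarrow> (\<forall>E. realizes E d \<longrightarrow> P (length d) E)"

definition sinks :: "(nat \<Rightarrow> nat set set \<Rightarrow> bool) \<Rightarrow> nat \<Rightarrow> nat list set" where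
  "sinks P n = {d. graphical n d \<and> \<not> forcibly P d \<and>
      \<not> (\<exists>d'. graphical n d' \<and> \<not> forcibly P d' \<and> d' \<noteq> d \<and> majorizes d' d)}"

definition partition_count :: "nat \<Rightarrow> nat" where
  "partition_count r = card {xs :: nat list. sorted xs \<and> (\<forall>x\<in>set xs. 0 < x) \<and> sum_list xs = r}"

end

theory Submission
  imports Defs
begin

(* Put n = 2h and K = k - 1, so h \<ge> 2K + 1.  To every partition xs of K we
   attach a graphical sequence sink_seq h K xs: two cliques of size h joined by exactly K
   edges, where K "hub" vertices of one clique each send one edge and the part vertices of
   the other clique receive xs!j edges each.  Its sum is n(h-1) + 2K, every term is \<ge> h - 1,
   and deleting the K joining edges disconnects the graph, so it is not forcibly
   k-edge-connected.  It is maximal: if d' majorizes it and some realization of d' is split by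
   deleting \<le> K edges, then degrees \<ge> h - 1 force both sides to have \<ge> h vertices, hence
   exactly h, and then sum d' \<le> n(h-1) + 2K, so d' equals the sequence. *)

section \<open>Neighbourhoods in simple graphs\<close>

definition nbrs :: "nat set set \<Rightarrow> nat \<Rightarrow> nat set" where
  "nbrs E v = {u. {v, u} \<in> E}"

lemma simple_graph_finite: "simple_graph n E \<Longrightarrow> finite E"
proof -
  assume "simple_graph n E"
  then have "E \<subseteq> (\<lambda>(u, v). {u, v}) ` ({..<n} \<times> {..<n})"
    unfolding simple_graph_def by fastforce
  then show "finite E" using finite_subset by blast
qed

lemma nbrs_subset:
  assumes "simple_graph n E" shows "nbrs E v \<subseteq> {..<n} - {v}"
proof
  fix u assume "u \<in> nbrs E v"
  then obtain a b where "a < n" "b < n" "a \<noteq> b" "{v, u} = {a, b}"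
    using assms unfolding simple_graph_def nbrs_def by blast
  then show "u \<in> {..<n} - {v}" by (auto simp: doubleton_eq_iff)
qed

lemma degree_nbrs:
  assumes "simple_graph n E" shows "degree E v = card (nbrs E v)"
proof -
  have "{e\<in>E. v \<in> e} = (\<lambda>u. {v, u}) ` nbrs E v"
  proof
    show "{e\<in>E. v \<in> e} \<subseteq> (\<lambda>u. {v, u}) ` nbrs E v"
    proof
      fix e assume e: "e \<in> {e\<in>E. v \<in> e}"
      then obtain a b where "e = {a, b}" using assms unfolding simple_graph_def by blast
      with e have "e = {v, if v = a then b else a}" by auto
      with e show "e \<in> (\<lambda>u. {v, u}) ` nbrs E v" unfolding nbrs_def by auto
    qed
  qed (auto simp: nbrs_def)
  moreover have "inj_on (\<lambda>u. {v, u}) (nbrs E v)"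
    by (auto simp: inj_on_def doubleton_eq_iff)
  ultimately show ?thesis unfolding degree_def by (simp add: card_image)
qed

text \<open>Degrees are bounded by the order; this makes S(P,n) finite.\<close>
lemma degree_le_order: "simple_graph n E \<Longrightarrow> degree E v \<le> n"
  using degree_nbrs nbrs_subset card_mono[of "{..<n}" "nbrs E v"] by fastforce

section \<open>Edge cuts\<close>

text \<open>A disconnected graph E - F has a nonempty proper vertex set S whose edges to the
  rest all lie in F: take the component of a vertex.\<close>
lemma disconnected_cut:
  assumes "\<not> connected_graph n (E - F)"
  obtains S where "S \<subseteq> {..<n}" "S \<noteq> {}" "{..<n} - S \<noteq> {}"
    "\<forall>x\<in>S. \<forall>y\<in>{..<n} - S. {x, y} \<in> E \<longrightarrow> {x, y} \<in> F"
proof -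
  define R where "R = (\<lambda>x y. {x, y} \<in> E - F)\<^sup>*\<^sup>*"
  obtain u v where uv: "u < n" "v < n" "\<not> R u v"
    using assms unfolding connected_graph_def R_def by blast
  define S where "S = {w. w < n \<and> R u w}"
  have "\<forall>x\<in>S. \<forall>y\<in>{..<n} - S. {x, y} \<in> E \<longrightarrow> {x, y} \<in> F"
    unfolding S_def R_def by (auto intro: rtranclp.rtrancl_into_rtrancl)
  moreover have "u \<in> S" "v \<in> {..<n} - S" using uv by (auto simp: S_def R_def)
  ultimately show thesis by (intro that[of S]) (auto simp: S_def)
qed

lemma cut_edges_bound:
  assumes "finite S" "finite T" "S \<inter> T = {}" "finite F"
    and "\<forall>x\<in>S. \<forall>y\<in>T. {x, y} \<in> E \<longrightarrow> {x, y} \<in> F"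
  shows "(\<Sum>w\<in>S. card (nbrs E w \<inter> T)) \<le> card F"
proof -
  have "(\<Sum>w\<in>S. card (nbrs E w \<inter> T)) = card (SIGMA w:S. nbrs E w \<inter> T)"
    using assms by simp
  also have "\<dots> \<le> card F"
  proof (rule card_inj_on_le[where f = "\<lambda>(w, y). {w, y}"])
    show "inj_on (\<lambda>(w, y). {w, y}) (SIGMA w:S. nbrs E w \<inter> T)"
      using assms(3) by (auto simp: inj_on_def doubleton_eq_iff)
    show "(\<lambda>(w, y). {w, y}) ` (SIGMA w:S. nbrs E w \<inter> T) \<subseteq> F"
      using assms(5) by (auto simp: nbrs_def)
  qed (use assms in auto)
  finally show ?thesis .
qed

lemma degree_inside_side:
  assumes "simple_graph n E" "S \<subseteq> {..<n}" "w \<in> S"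
  shows "degree E w \<le> card S - 1 + card (nbrs E w \<inter> ({..<n} - S))"
proof -
  have fS: "finite S" using assms(2) finite_subset by blast
  have "nbrs E w \<subseteq> (S - {w}) \<union> (nbrs E w \<inter> ({..<n} - S))"
    using nbrs_subset[OF assms(1), of w] by auto
  then have "card (nbrs E w) \<le> card ((S - {w}) \<union> (nbrs E w \<inter> ({..<n} - S)))"
    by (intro card_mono) (use fS in auto)
  also have "\<dots> \<le> card (S - {w}) + card (nbrs E w \<inter> ({..<n} - S))" by (rule card_Un_le)
  finally show ?thesis using fS assms degree_nbrs by simp
qed

lemma degree_sum_side:
  assumes "simple_graph n E" "S \<subseteq> {..<n}"
  shows "(\<Sum>w\<in>S. degree E w) \<le> card S * (card S - 1) + (\<Sum>w\<in>S. card (nbrs E w \<inter> ({..<n} - S)))"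
proof -
  have "(\<Sum>w\<in>S. degree E w) \<le> (\<Sum>w\<in>S. card S - 1 + card (nbrs E w \<inter> ({..<n} - S)))"
    using degree_inside_side[OF assms] by (intro sum_mono) auto
  then show ?thesis by (simp add: sum.distrib)
qed

text \<open>For 1 \<le> s < h, a side of size s meets at least h - 1 crossing edges in total.\<close>
lemma product_lower_bound:
  fixes s h :: nat assumes "1 \<le> s" "s < h" shows "h - 1 \<le> s * (h - s)"
proof -
  define a b where "a = s - 1" and "b = h - s - 1"
  have "s = 1 + a" "h - s = 1 + b" using assms by (simp_all add: a_def b_def)
  then have "s * (h - s) = 1 + a + b + a * b" "h = 2 + a + b" using assms by (auto simp: algebra_simps)
  then show ?thesis by simp
qed

text \<open>If all degrees are \<ge> h - 1 and fewer than h - 1 edges leave a nonempty side S, then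
  S has at least h vertices: a side of size s < h would send out \<ge> s(h - s) \<ge> h - 1 edges.\<close>
lemma cut_side_large:
  assumes "simple_graph n E" "S \<subseteq> {..<n}" "S \<noteq> {}"
    and "\<forall>w\<in>S. h - 1 \<le> degree E w"
    and "(\<Sum>w\<in>S. card (nbrs E w \<inter> ({..<n} - S))) \<le> K" "K < h - 1"
  shows "h \<le> card S"
proof (rule ccontr)
  assume small: "\<not> h \<le> card S"
  have c1: "1 \<le> card S" using assms(2,3) finite_subset by (fastforce simp: Suc_le_eq card_gt_0_iff)
  have "\<forall>w\<in>S. h - card S \<le> card (nbrs E w \<inter> ({..<n} - S))"
    using degree_inside_side[OF assms(1,2)] assms(4) c1 by fastforce
  then have "card S * (h - card S) \<le> (\<Sum>w\<in>S. card (nbrs E w \<inter> ({..<n} - S)))"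
    using sum_bounded_below[of S "h - card S"] by simp
  moreover have "h - 1 \<le> card S * (h - card S)" using product_lower_bound c1 small by simp
  ultimately show False using assms(5,6) by linarith
qed

section \<open>Rigidity of sequences with small surplus\<close>

lemma majorizing_list_eq:
  fixes d d' :: "nat list"
  assumes "length d' = length d" "\<forall>i<length d. d ! i \<le> d' ! i" "sum_list d' \<le> sum_list d"
  shows "d' = d"
proof (rule ccontr)
  assume "d' \<noteq> d"
  then obtain i where i: "i < length d" "d ! i \<noteq> d' ! i"
    using assms(1) by (metis nth_equalityI)
  have "(\<Sum>i<length d. d ! i) < (\<Sum>i<length d. d' ! i)"
    using assms(2) i by (intro sum_strict_mono_ex1) (auto intro!: bexI[of _ i] le_neq_implies_less)
  then show False using assms by (simp add: sum_list_sum_nth atLeast0LessThan)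
qed

lemma majorizing_cuttable_eq:
  assumes n: "n = 2 * h" and K: "K < h - 1"
    and d_len: "length d = n" and d_low: "\<forall>i<n. h - 1 \<le> d ! i"
    and d_sum: "sum_list d = n * (h - 1) + 2 * K"
    and real: "realizes E d'" and maj: "majorizes d' d"
    and FE: "F \<subseteq> E" and F_card: "card F \<le> K" and split: "\<not> connected_graph n (E - F)"
  shows "d' = d"
proof -
  have d'_len: "length d' = n" using maj d_len by (simp add: majorizes_def)
  have sg: "simple_graph n E" and deg: "\<forall>i<n. degree E i = d' ! i"
    using real d'_len by (auto simp: realizes_def)
  have fF: "finite F" using simple_graph_finite[OF sg] FE finite_subset by blast
  obtain S where S: "S \<subseteq> {..<n}" "S \<noteq> {}" "{..<n} - S \<noteq> {}"
    and cut: "\<forall>x\<in>S. \<forall>y\<in>{..<n} - S. {x, y} \<in> E \<longrightarrow> {x, y} \<in> F"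
    using disconnected_cut[OF split] by blast
  define T where "T = {..<n} - S"
  have T: "T \<subseteq> {..<n}" "T \<noteq> {}" "{..<n} - T = S" using S by (auto simp: T_def)
  have cut': "\<forall>x\<in>T. \<forall>y\<in>{..<n} - T. {x, y} \<in> E \<longrightarrow> {x, y} \<in> F"
    using cut T(3) by (metis T_def insert_commute)
  have out_S: "(\<Sum>w\<in>S. card (nbrs E w \<inter> ({..<n} - S))) \<le> K"
    using cut_edges_bound[OF _ _ _ fF cut] S(1) F_card finite_subset by fastforce
  have out_T: "(\<Sum>w\<in>T. card (nbrs E w \<inter> ({..<n} - T))) \<le> K"
    using cut_edges_bound[OF _ _ _ fF cut'] T(1) F_card finite_subset by fastforce
  have low: "\<forall>w<n. h - 1 \<le> degree E w"
    using d_low maj deg d_len by (auto simp: majorizes_def intro: le_trans)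
  have "h \<le> card S" using cut_side_large[OF sg S(1,2) _ out_S K] low S(1) by blast
  moreover have "h \<le> card T" using cut_side_large[OF sg T(1,2) _ out_T K] low T(1) by blast
  moreover have "card S + card T = n"
    using S(1) card_mono[OF _ S(1)] by (simp add: T_def card_Diff_subset finite_subset)
  ultimately have hS: "card S = h" "card T = h" using n by auto
  have "sum_list d' = (\<Sum>w\<in>S \<union> T. degree E w)"
    using deg d'_len S(1) by (simp add: sum_list_sum_nth atLeast0LessThan T_def Un_absorb1)
  also have "\<dots> = (\<Sum>w\<in>S. degree E w) + (\<Sum>w\<in>T. degree E w)"
    using S(1) T(1) finite_subset by (intro sum.union_disjoint) (auto simp: T_def)
  also have "\<dots> \<le> n * (h - 1) + 2 * K"
    using degree_sum_side[OF sg S(1)] degree_sum_side[OF sg T(1)] out_S out_T hS n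
    by (simp add: algebra_simps)
  finally show ?thesis using majorizing_list_eq maj d_sum by (simp add: majorizes_def)
qed

section \<open>The two-clique construction\<close>

text \<open>part_labels xs lists each index j exactly xs ! j times; it assigns the hub vertices
  to the part vertices.\<close>
definition part_labels :: "nat list \<Rightarrow> nat list" where
  "part_labels xs = concat (map (\<lambda>j. replicate (xs ! j) j) [0..<length xs])"

lemma part_labels_count:
  assumes "j < length xs"
  shows "card {s. s < length (part_labels xs) \<and> part_labels xs ! s = j} = xs ! j"
proof -
  have count: "length (filter (\<lambda>y. y = j) (concat (map (\<lambda>i. replicate (f i) i) [0..<m])))
      = (if j < m then f j else 0)" for f :: "nat \<Rightarrow> nat" and m
    by (induction m) (auto simp: filter_replicate less_Suc_eq)
  have "card {s. s < length (part_labels xs) \<and> part_labels xs ! s = j}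
      = length (filter (\<lambda>y. y = j) (part_labels xs))"
    by (rule length_filter_conv_card[symmetric])
  also have "\<dots> = xs ! j"
    unfolding part_labels_def using count[of "\<lambda>i. xs ! i" "length xs"] assms by simp
  finally show ?thesis .
qed

lemma part_labels_length: "length (part_labels xs) = sum_list xs"
  unfolding part_labels_def by (simp add: length_concat comp_def) (metis map_nth map_eq_conv)

lemma part_labels_range: "s < length (part_labels xs) \<Longrightarrow> part_labels xs ! s < length xs"
  using nth_mem[of s "part_labels xs"] by (auto simp: part_labels_def)

definition clique :: "nat set \<Rightarrow> nat set set" where
  "clique A = {{a, b} | a b. a \<in> A \<and> b \<in> A \<and> a \<noteq> b}"

lemma clique_mem: "{v, u} \<in> clique A \<longleftrightarrow> v \<in> A \<and> u \<in> A \<and> v \<noteq> u"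
  unfolding clique_def by (auto simp: doubleton_eq_iff)

lemma simple_graph_clique: "A \<subseteq> {..<n} \<Longrightarrow> simple_graph n (clique A)"
  unfolding simple_graph_def clique_def by blast

lemma simple_graph_Un: "simple_graph n (E \<union> F) \<longleftrightarrow> simple_graph n E \<and> simple_graph n F"
  unfolding simple_graph_def by blast

text \<open>Vertex layout on {0..<2h} for a partition xs of K with r = length xs parts,
  p = 2h - r - K and q = 2h - r:
  [0, h-K) and the hubs [p, q) form clique B; [h-K, p) and the part vertices [q, 2h) form
  clique A; hub p + s is joined to part vertex q + part_labels xs ! s.\<close>
definition side_A :: "nat \<Rightarrow> nat \<Rightarrow> nat list \<Rightarrow> nat set" where
  "side_A h K xs = {h - K..<2*h - length xs - K} \<union> {2*h - length xs..<2*h}"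

definition side_B :: "nat \<Rightarrow> nat \<Rightarrow> nat list \<Rightarrow> nat set" where
  "side_B h K xs = {0..<h - K} \<union> {2*h - length xs - K..<2*h - length xs}"

definition cross_edges :: "nat \<Rightarrow> nat \<Rightarrow> nat list \<Rightarrow> nat set set" where
  "cross_edges h K xs =
     (\<lambda>s. {2*h - length xs - K + s, 2*h - length xs + part_labels xs ! s}) ` {..<K}"

definition sink_graph :: "nat \<Rightarrow> nat \<Rightarrow> nat list \<Rightarrow> nat set set" where
  "sink_graph h K xs = clique (side_A h K xs) \<union> clique (side_B h K xs) \<union> cross_edges h K xs"

definition sink_seq :: "nat \<Rightarrow> nat \<Rightarrow> nat list \<Rightarrow> nat list" where
  "sink_seq h K xs =
     replicate (2*h - length xs - K) (h - 1) @ replicate K h @ map (\<lambda>x. h - 1 + x) xs"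

locale two_cliques =
  fixes h K :: nat and xs :: "nat list"
  assumes h_large: "2 * K < h"
    and parts_pos: "\<forall>x\<in>set xs. 0 < x" and parts_sum: "sum_list xs = K"
begin

abbreviation r where "r \<equiv> length xs"
definition p where "p = 2*h - r - K"
definition q where "q = 2*h - r"

lemma r_le_K: "r \<le> K"
proof -
  have "length ys \<le> sum_list ys" if "\<forall>y\<in>set ys. 0 < y" for ys :: "nat list"
    using that by (induction ys) auto
  then show ?thesis using parts_pos parts_sum by blast
qed

lemma layout: "p + K = q" "q + r = 2*h" "h - K < p" "K < h"
  using r_le_K h_large by (auto simp: p_def q_def)

lemma side_A_eq: "side_A h K xs = {h - K..<p} \<union> {q..<2*h}"
  by (simp add: side_A_def p_def q_def)

lemma side_B_eq: "side_B h K xs = {0..<h - K} \<union> {p..<q}"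
  by (simp add: side_B_def p_def q_def)

lemma cross_edges_eq: "cross_edges h K xs = (\<lambda>s. {p + s, q + part_labels xs ! s}) ` {..<K}"
  by (simp add: cross_edges_def p_def q_def)

lemma sink_seq_eq:
  "sink_seq h K xs = replicate p (h - 1) @ replicate K h @ map (\<lambda>x. h - 1 + x) xs"
  by (simp add: sink_seq_def p_def)

lemma labels: "length (part_labels xs) = K" "s < K \<Longrightarrow> part_labels xs ! s < r"
  using part_labels_length[of xs] part_labels_range[of s xs] parts_sum by auto

lemma card_side_A: "card (side_A h K xs) = h"
  using layout by (simp add: side_A_eq card_Un_disjoint)

lemma card_side_B: "card (side_B h K xs) = h"
  using layout by (simp add: side_B_eq card_Un_disjoint)

lemma nbrs_sink_graph: "u \<in> nbrs (sink_graph h K xs) v \<longleftrightarrow>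
   (v \<in> side_A h K xs \<and> u \<in> side_A h K xs \<and> v \<noteq> u) \<or>
   (v \<in> side_B h K xs \<and> u \<in> side_B h K xs \<and> v \<noteq> u) \<or>
   (\<exists>s<K. (v = p + s \<and> u = q + part_labels xs ! s) \<or> (v = q + part_labels xs ! s \<and> u = p + s))"
  unfolding nbrs_def sink_graph_def cross_edges_eq by (auto simp: clique_mem doubleton_eq_iff)

lemma nbrs_cases:
  "v < h - K \<Longrightarrow> nbrs (sink_graph h K xs) v = side_B h K xs - {v}"
  "h - K \<le> v \<Longrightarrow> v < p \<Longrightarrow> nbrs (sink_graph h K xs) v = side_A h K xs - {v}"
  "s < K \<Longrightarrow> nbrs (sink_graph h K xs) (p + s) = (side_B h K xs - {p + s}) \<union> {q + part_labels xs ! s}"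
  "j < r \<Longrightarrow> nbrs (sink_graph h K xs) (q + j) =
     (side_A h K xs - {q + j}) \<union> (\<lambda>s. p + s) ` {s. s < K \<and> part_labels xs ! s = j}"
  using layout by (auto simp: nbrs_sink_graph side_A_eq side_B_eq)

lemma sink_seq_length: "length (sink_seq h K xs) = 2*h"
  using layout by (simp add: sink_seq_eq)

lemma sink_seq_nth:
  "v < p \<Longrightarrow> sink_seq h K xs ! v = h - 1"
  "s < K \<Longrightarrow> sink_seq h K xs ! (p + s) = h"
  "j < r \<Longrightarrow> sink_seq h K xs ! (q + j) = h - 1 + xs ! j"
  using layout(1) by (auto simp: sink_seq_eq nth_append)

lemma simple_sink_graph: "simple_graph (2*h) (sink_graph h K xs)"
proof -
  have "side_A h K xs \<subseteq> {..<2*h}" "side_B h K xs \<subseteq> {..<2*h}"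
    using layout by (auto simp: side_A_eq side_B_eq)
  moreover have "simple_graph (2*h) (cross_edges h K xs)"
  proof -
    have "p + s < 2*h \<and> q + part_labels xs ! s < 2*h \<and> p + s \<noteq> q + part_labels xs ! s"
      if "s < K" for s
      using labels(2)[OF that] layout that by linarith
    then show ?thesis unfolding simple_graph_def cross_edges_eq by blast
  qed
  ultimately show ?thesis by (simp add: sink_graph_def simple_graph_Un simple_graph_clique)
qed

lemma degree_sink_graph: "v < 2*h \<Longrightarrow> degree (sink_graph h K xs) v = sink_seq h K xs ! v"
proof -
  assume v: "v < 2*h"
  have fin: "finite (side_A h K xs)" "finite (side_B h K xs)" by (auto simp: side_A_eq side_B_eq)
  have dg: "degree (sink_graph h K xs) v = card (nbrs (sink_graph h K xs) v)"
    by (rule degree_nbrs[OF simple_sink_graph])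
  consider "v < h - K" | "h - K \<le> v" "v < p" | s where "s < K" "v = p + s"
    | j where "j < r" "v = q + j"
    using v layout by (metis add_diff_inverse_nat add_less_cancel_left not_less)
  then show ?thesis
  proof cases
    case 1
    then have "v \<in> side_B h K xs" by (simp add: side_B_eq)
    then show ?thesis using 1 layout dg nbrs_cases card_side_B fin sink_seq_nth by simp
  next
    case 2
    then have "v \<in> side_A h K xs" by (simp add: side_A_eq)
    then show ?thesis using 2 dg nbrs_cases card_side_A fin sink_seq_nth by simp
  next
    case (3 s)
    have "p + s \<in> side_B h K xs" "q + part_labels xs ! s \<notin> side_B h K xs"
      using 3 layout by (auto simp: side_B_eq)
    then show ?thesis using 3 dg nbrs_cases card_side_B fin sink_seq_nth h_large by simp
  next
    case (4 j)
    have "q + j \<in> side_A h K xs" using 4 layout by (simp add: side_A_eq)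
    moreover have "(side_A h K xs - {q + j}) \<inter> (\<lambda>s. p + s) ` {s. s < K \<and> part_labels xs ! s = j} = {}"
      using layout by (auto simp: side_A_eq)
    moreover have "card ((\<lambda>s. p + s) ` {s. s < K \<and> part_labels xs ! s = j}) = xs ! j"
      using part_labels_count[of j xs] 4 labels by (simp add: card_image)
    ultimately show ?thesis using 4 dg nbrs_cases card_side_A fin sink_seq_nth
      by (simp add: card_Un_disjoint)
  qed
qed

lemma realizes_sink_graph: "realizes (sink_graph h K xs) (sink_seq h K xs)"
  unfolding realizes_def using simple_sink_graph degree_sink_graph sink_seq_length by simp

text \<open>Deleting the K cross edges leaves no path from clique B into clique A.\<close>
lemma sink_graph_not_edge_connected: "\<not> k_edge_connected (K + 1) (2*h) (sink_graph h K xs)"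
proof
  assume kec: "k_edge_connected (K + 1) (2*h) (sink_graph h K xs)"
  let ?R = "(\<lambda>x y. {x, y} \<in> sink_graph h K xs - cross_edges h K xs)\<^sup>*\<^sup>*"
  have "card (cross_edges h K xs) \<le> K"
    unfolding cross_edges_eq using card_image_le[of "{..<K}"] by simp
  then have "connected_graph (2*h) (sink_graph h K xs - cross_edges h K xs)"
    using kec unfolding k_edge_connected_def sink_graph_def by auto
  then have "?R 0 (h - K)" using h_large unfolding connected_graph_def by simp
  moreover have "?R x y \<Longrightarrow> x \<in> side_B h K xs \<Longrightarrow> y \<in> side_B h K xs" for x y
  proof (induction rule: rtranclp_induct)
    case (step y z)
    have "side_A h K xs \<inter> side_B h K xs = {}" using layout by (auto simp: side_A_eq side_B_eq)
    then show ?case using step unfolding sink_graph_def by (auto simp: clique_mem)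
  qed
  moreover have "0 \<in> side_B h K xs" using h_large by (simp add: side_B_eq)
  ultimately have "h - K \<in> side_B h K xs" by blast
  then show False using layout by (simp add: side_B_eq)
qed

lemma sink_seq_sorted: "sorted xs \<Longrightarrow> sorted (sink_seq h K xs)"
  using parts_pos by (auto simp: sink_seq_eq sorted_append sorted_map intro: sorted_wrt_mono_rel[rotated])

lemma sink_seq_lower: "\<forall>i<2*h. h - 1 \<le> sink_seq h K xs ! i"
proof (intro allI impI)
  fix i assume "i < 2*h"
  then have "sink_seq h K xs ! i \<in> set (sink_seq h K xs)" using sink_seq_length by simp
  then show "h - 1 \<le> sink_seq h K xs ! i" by (auto simp: sink_seq_eq split: if_splits)
qed

lemma sink_seq_sum: "sum_list (sink_seq h K xs) = 2*h*(h - 1) + 2*K"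
proof -
  have "sum_list (map (\<lambda>x. c + x) ys) = length ys * c + sum_list ys" for c and ys :: "nat list"
    by (induction ys) auto
  then have "sum_list (map (\<lambda>x. h - 1 + x) xs) = r * (h - 1) + K" using parts_sum by simp
  moreover have "K * h = K * (h - 1) + K" using h_large by (cases h) auto
  ultimately have "sum_list (sink_seq h K xs) = (p + K + r) * (h - 1) + 2*K"
    by (simp add: sink_seq_eq sum_list_replicate algebra_simps)
  then show ?thesis using layout by simp
qed

text \<open>xs can be read off from sink_seq h K xs: the number of terms above h - 1 gives
  its length, and the last length xs terms give its parts.\<close>
lemma sink_seq_large_terms: "length (filter (\<lambda>x. h - 1 < x) (sink_seq h K xs)) = K + r"
proof -
  have "filter (\<lambda>x. h - 1 < x) (map (\<lambda>x. h - 1 + x) xs) = map (\<lambda>x. h - 1 + x) xs"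
    using parts_pos by (intro filter_True) auto
  then show ?thesis using h_large by (simp add: sink_seq_eq filter_replicate del: filter_map)
qed

lemma sink_seq_tail: "drop (2*h - r) (sink_seq h K xs) = map (\<lambda>x. h - 1 + x) xs"
  using layout by (simp add: sink_seq_eq)

end

section \<open>Counting the sinks\<close>

definition partitions :: "nat \<Rightarrow> nat list set" where
  "partitions m = {xs. sorted xs \<and> (\<forall>x\<in>set xs. 0 < x) \<and> sum_list xs = m}"

lemma two_cliques_partition:
  "2 * K < h \<Longrightarrow> xs \<in> partitions K \<Longrightarrow> two_cliques h K xs"
  by unfold_locales (auto simp: partitions_def)

lemma sinks_finite: "finite (sinks P n)"
proof (rule finite_subset)
  show "sinks P n \<subseteq> {d. set d \<subseteq> {..n} \<and> length d = n}"
  proof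
    fix d assume "d \<in> sinks P n"
    then obtain E where re: "realizes E d" and ld: "length d = n"
      by (auto simp: sinks_def graphical_def)
    then have "d ! i \<le> n" if "i < n" for i
      using degree_le_order[of n E i] that by (auto simp: realizes_def)
    then show "d \<in> {d. set d \<subseteq> {..n} \<and> length d = n}" using ld by (auto simp: in_set_conv_nth)
  qed
qed (rule finite_lists_length_eq, simp)

lemma sink_seq_inj:
  assumes "2 * K < h" shows "inj_on (sink_seq h K) (partitions K)"
proof
  fix xs ys assume xs: "xs \<in> partitions K" and ys: "ys \<in> partitions K"
    and eq: "sink_seq h K xs = sink_seq h K ys"
  interpret X: two_cliques h K xs using two_cliques_partition[OF assms xs] .
  interpret Y: two_cliques h K ys using two_cliques_partition[OF assms ys] .
  have "length xs = length ys"
    using X.sink_seq_large_terms Y.sink_seq_large_terms eq by simp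
  then have "drop (2*h - length xs) (sink_seq h K xs) = drop (2*h - length ys) (sink_seq h K ys)"
    using eq by simp
  then have "map (\<lambda>x. h - 1 + x) xs = map (\<lambda>x. h - 1 + x) ys"
    by (simp only: X.sink_seq_tail Y.sink_seq_tail)
  then show "xs = ys" by (simp add: inj_map_eq_map inj_def)
qed

lemma sink_seq_in_sinks:
  assumes "1 \<le> K" "2 * K < h" "xs \<in> partitions K"
  shows "sink_seq h K xs \<in> sinks (k_edge_connected (K + 1)) (2*h)"
proof -
  interpret two_cliques h K xs using two_cliques_partition assms by blast
  let ?d = "sink_seq h K xs"
  have graph: "graphical (2*h) ?d"
    using sink_seq_length realizes_sink_graph sink_seq_sorted assms(3)
    by (auto simp: graphical_def partitions_def)
  have not_forced: "\<not> forcibly (k_edge_connected (K + 1)) ?d"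
    using realizes_sink_graph sink_graph_not_edge_connected sink_seq_length
    by (auto simp: forcibly_def)
  have "d' = ?d" if gr: "graphical (2*h) d'" and nf: "\<not> forcibly (k_edge_connected (K + 1)) d'"
    and maj: "majorizes d' ?d" for d'
  proof -
    obtain E where E: "realizes E d'" "\<not> k_edge_connected (K + 1) (2*h) E"
      using gr nf by (auto simp: forcibly_def graphical_def)
    then obtain F where "F \<subseteq> E" "card F \<le> K" "\<not> connected_graph (2*h) (E - F)"
      unfolding k_edge_connected_def by auto
    then show ?thesis using E(1)
      using majorizing_cuttable_eq[of "2*h" h K ?d] assms(1,2) maj
        sink_seq_length sink_seq_lower sink_seq_sum by simp
  qed
  then show ?thesis using graph not_forced by (auto simp: sinks_def)
qed

theorem theorem3p1p3:
  fixes k n :: nat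
  assumes "k \<ge> 2" and "even n" and "n \<ge> 4 * k - 2"
  shows "card (sinks (k_edge_connected k) n) \<ge> partition_count (k - 1)"
proof -
  define h K where "h = n div 2" and "K = k - 1"
  have n: "n = 2 * h" and k: "k = K + 1" and K: "1 \<le> K" "2 * K < h"
    using assms by (auto simp: h_def K_def)
  have "sink_seq h K ` partitions K \<subseteq> sinks (k_edge_connected k) n"
    using sink_seq_in_sinks[OF K] n k by blast
  then have "card (partitions K) \<le> card (sinks (k_edge_connected k) n)"
    using card_inj_on_le[OF sink_seq_inj[OF K(2)] _ sinks_finite] by blast
  then show ?thesis by (simp add: partition_count_def partitions_def K_def)
qed

end
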